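(* Let $\sim$ denote either $\cong$ or $\simeq$. A type expression $A$ is a $\top$-variant if and only if $A\sim\top$.
   Context: Type expressions: fix a countably infinite set of type variables $X,Y,Z,\dots$. Pseudo type expressions are generated by $A::=X\mid A\to A\mid \bullet A\mid \mu X.A$ ($\mu$ binds $X$; $\alpha$-convertible expressions are identified; $\to$ associates to the right; $\bullet$ binds tighter than $\to$, which binds tighter than $\mu$). $A[B/X]$ denotes capture-avoiding substitution. $\top$ abbreviates $\mu X.\bullet X$, and $\bullet^n A$ denotes $A$ prefixed by $n$ copies of $\bullet$. The tail $t(A)$ is defined by $t(X)=X$, $t(A\to B)=t(B)$, $t(\bullet A)=\bullet t(A)$, $t(\mu X.A)=\mu X.t(A)$; it always has the form $\bullet^{m_0}\mu X_1.\bullet^{m_1}\mu X_2.\cdots\mu X_n.\bullet^{m_n}Y$. $A$ is a $\top$-variant iff $Y=X_i$ for some $1\le i\le n$ with $X_i\notin\{X_{i+1},\dots,X_n\}$ and $m_i+\dots+m_n\ge 1$. $A$ is proper in $X$ iff: a variable $Y$ is proper in $X$ iff $Y\neq X$; $\bullet A$ is always proper in $X$; $A\to B$ is proper in $X$ iff both $A,B$ are proper in $X$ or $B$ is a $\top$-variant; for $Y\ne X$, $\mu Y.A$ is proper in $X$ iff $A$ is proper in $X$ or $\mu Y.A$ is a $\top$-variant. Type expressions are the least set of pseudo type expressions containing all type variables, closed under $\to$ and $\bullet$, and containing $\mu X.A$ whenever it contains $A$ and $A$ is proper in $X$. Equality: $\cong$ is the least relation on type expressions such that: $A\cong A$; $A\cong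 B$ implies $B\cong A$; $A\cong B$ and $B\cong C$ imply $A\cong C$; $A\cong B$ implies $\bullet A\cong\bullet B$; $A\cong C$ and $B\cong D$ imply $A\to B\cong C\to D$; $A\to\top\cong\top$; $\mu X.A\cong A[\mu X.A/X]$; and if $A\cong C[A/X]$ with $C$ proper in $X$, then $A\cong\mu X.C$. $\simeq$ is the least relation satisfying the same closure conditions and additionally $\bullet(A\to B)\simeq\bullet A\to\bullet B$. *)

theory Defs
  imports Main
begin

text \<open>Type expressions in de Bruijn representation: alpha-convertible expressions
  are identified automatically.  A variable \<open>TVar j\<close> refers to the j-th enclosing
  \<open>\<mu>\<close>-binder if there is one, otherwise to a free type variable (free type variables
  form the countably infinite set of naturals).\<close>

datatype ty = TVar nat | Arr ty ty | Later ty | Mu ty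

fun lift :: "nat \<Rightarrow> ty \<Rightarrow> ty" where
  "lift k (TVar j) = (if j < k then TVar j else TVar (Suc j))"
| "lift k (Arr a b) = Arr (lift k a) (lift k b)"
| "lift k (Later a) = Later (lift k a)"
| "lift k (Mu a) = Mu (lift (Suc k) a)"

text \<open>\<open>subst A k B\<close> substitutes B for the variable with index k in A, removing that
  variable (indices above k are decremented). Hence for a \<mu>-body A,
  \<open>subst A 0 B\<close> is A[B/X] where X is the variable bound by the \<mu>.\<close>

fun subst :: "ty \<Rightarrow> nat \<Rightarrow> ty \<Rightarrow> ty" where
  "subst (TVar j) k B = (if j < k then TVar j else if j = k then B else TVar (j - 1))"
| "subst (Arr a b) k B = Arr (subst a k B) (subst b k B)"
| "subst (Later a) k B = Later (subst a k B)"
| "subst (Mu a) k B = Mu (subst a (Suc k) (lift 0 B))"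

definition Top :: ty where
  "Top = Mu (Later (TVar 0))"

fun tail :: "ty \<Rightarrow> ty" where
  "tail (TVar j) = TVar j"
| "tail (Arr a b) = tail b"
| "tail (Later a) = Later (tail a)"
| "tail (Mu a) = Mu (tail a)"

text \<open>\<open>guarded_bound T k g\<close>: the final variable of the tail-form T is the variable of
  index k (relative to the top of T), and at least one \<bullet> occurs between the top of
  T and that variable (or g already holds).\<close>

fun guarded_bound :: "ty \<Rightarrow> nat \<Rightarrow> bool \<Rightarrow> bool" where
  "guarded_bound (TVar j) k g = (j = k \<and> g)"
| "guarded_bound (Arr a b) k g = guarded_bound b k g"
| "guarded_bound (Later a) k g = guarded_bound a k True"
| "guarded_bound (Mu a) k g = guarded_bound a (Suc k) g"

text \<open>For T of the shape \<bullet>^m0 \<mu>X1. \<bullet>^m1 ... \<mu>Xn. \<bullet>^mn Y: there is a binder \<mu>Xi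
  binding Y (the innermost binder with that name, automatic in de Bruijn form)
  with m_i + ... + m_n \<ge> 1.\<close>

fun tv_tail :: "ty \<Rightarrow> bool" where
  "tv_tail (TVar j) = False"
| "tv_tail (Arr a b) = tv_tail b"
| "tv_tail (Later a) = tv_tail a"
| "tv_tail (Mu a) = (guarded_bound a 0 False \<or> tv_tail a)"

definition top_variant :: "ty \<Rightarrow> bool" where
  "top_variant A \<longleftrightarrow> tv_tail (tail A)"

fun proper :: "ty \<Rightarrow> nat \<Rightarrow> bool" where
  "proper (TVar j) k = (j \<noteq> k)"
| "proper (Later a) k = True"
| "proper (Arr a b) k = ((proper a k \<and> proper b k) \<or> top_variant b)"
| "proper (Mu a) k = (proper a (Suc k) \<or> top_variant (Mu a))"

inductive type_expr :: "ty \<Rightarrow> bool" where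
  te_var: "type_expr (TVar j)"
| te_arr: "type_expr a \<Longrightarrow> type_expr b \<Longrightarrow> type_expr (Arr a b)"
| te_later: "type_expr a \<Longrightarrow> type_expr (Later a)"
| te_mu: "type_expr a \<Longrightarrow> proper a 0 \<Longrightarrow> type_expr (Mu a)"

text \<open>Equality relations: \<open>ty_eq False\<close> is \<cong>, \<open>ty_eq True\<close> is \<simeq> (with the extra
  axiom \<bullet>(A\<rightarrow>B) \<simeq> \<bullet>A \<rightarrow> \<bullet>B).\<close>

inductive ty_eq :: "bool \<Rightarrow> ty \<Rightarrow> ty \<Rightarrow> bool" for d :: bool where
  eq_refl: "type_expr A \<Longrightarrow> ty_eq d A A"
| eq_sym: "ty_eq d A B \<Longrightarrow> ty_eq d B A"
| eq_trans: "ty_eq d A B \<Longrightarrow> ty_eq d B C \<Longrightarrow> ty_eq d A C"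
| eq_later: "ty_eq d A B \<Longrightarrow> ty_eq d (Later A) (Later B)"
| eq_arr: "ty_eq d A C \<Longrightarrow> ty_eq d B D \<Longrightarrow> ty_eq d (Arr A B) (Arr C D)"
| eq_arr_top: "type_expr A \<Longrightarrow> ty_eq d (Arr A Top) Top"
| eq_unfold: "type_expr (Mu A) \<Longrightarrow> ty_eq d (Mu A) (subst A 0 (Mu A))"
| eq_fix: "ty_eq d A (subst C 0 A) \<Longrightarrow> type_expr C \<Longrightarrow> proper C 0 \<Longrightarrow> ty_eq d A (Mu C)"
| eq_dist: "d \<Longrightarrow> type_expr A \<Longrightarrow> type_expr B \<Longrightarrow>
            ty_eq d (Later (Arr A B)) (Arr (Later A) (Later B))"

abbreviation cong_ty :: "ty \<Rightarrow> ty \<Rightarrow> bool" where "cong_ty \<equiv> ty_eq False"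
abbreviation simeq_ty :: "ty \<Rightarrow> ty \<Rightarrow> bool" where "simeq_ty \<equiv> ty_eq True"

end

theory Submission
  imports Defs
begin

text \<open>Every type expression has a tail ending in a variable, and what matters about that
  variable is whether it is free (and under how many \<bullet>), or bound by a \<mu> with a \<bullet>
  in between (the \<top>-variants).  This abstract ``end of the tail'' commutes with
  substitution and is preserved by every equality axiom, and \<top> is a \<top>-variant; so
  only \<top>-variants can equal \<top>.  Conversely, by induction on the type expression:
  \<open>A \<rightarrow> B \<cong> A \<rightarrow> \<top> \<cong> \<top>\<close>, \<open>\<bullet>A \<cong> \<bullet>\<top> \<cong> \<top>\<close>, and for \<open>\<mu>X.C\<close> the induction hypothesis gives
  \<open>C[\<top>/X] \<cong> \<top>\<close>, so \<open>\<top> \<cong> \<mu>X.C\<close> by uniqueness of fixed points.  The last step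
  substitutes \<top> into the body, so the induction is carried out for all instances
  obtained by substituting \<top> for variables.\<close>

text \<open>\<open>Var_end j m\<close>: the tail ends in the free variable j under m occurrences of \<bullet>;
  \<open>Loop_end\<close>: it ends in a variable bound with no \<bullet> in between, which never happens
  in a type expression.\<close>

datatype tail_end = Top_end | Loop_end | Var_end nat nat

fun delay :: "nat \<Rightarrow> tail_end \<Rightarrow> tail_end" where
  "delay n (Var_end j m) = Var_end j (m + n)"
| "delay n e = e"

fun lift_end :: "nat \<Rightarrow> tail_end \<Rightarrow> tail_end" where
  "lift_end k (Var_end j m) = (if j < k then Var_end j m else Var_end (Suc j) m)"
| "lift_end k e = e"

fun subst_end :: "tail_end \<Rightarrow> nat \<Rightarrow> tail_end \<Rightarrow> tail_end" where
  "subst_end (Var_end j m) k e =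
     (if j < k then Var_end j m else if j = k then delay m e else Var_end (j - 1) m)"
| "subst_end e' k e = e'"

fun bind_end :: "tail_end \<Rightarrow> tail_end" where
  "bind_end (Var_end 0 m) = (if m > 0 then Top_end else Loop_end)"
| "bind_end (Var_end (Suc j) m) = Var_end j m"
| "bind_end e = e"

fun tail_end_of :: "ty \<Rightarrow> tail_end" where
  "tail_end_of (TVar j) = Var_end j 0"
| "tail_end_of (Arr a b) = tail_end_of b"
| "tail_end_of (Later a) = delay 1 (tail_end_of a)"
| "tail_end_of (Mu a) = bind_end (tail_end_of a)"

lemma bind_end_eq_Top_end [simp]:
  "bind_end e = Top_end \<longleftrightarrow> e = Top_end \<or> (\<exists>m>0. e = Var_end 0 m)"
  by (cases e rule: bind_end.cases) auto

lemma bind_end_eq_Loop_end [simp]: "bind_end e = Loop_end \<longleftrightarrow> e = Loop_end \<or> e = Var_end 0 0"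
  by (cases e rule: bind_end.cases) auto

lemma bind_end_eq_Var_end [simp]: "bind_end e = Var_end k m \<longleftrightarrow> e = Var_end (Suc k) m"
  by (cases e rule: bind_end.cases) auto

lemma delay_eq_Top_end [simp]: "delay n e = Top_end \<longleftrightarrow> e = Top_end"
  by (cases e) auto

lemma delay_eq_Loop_end [simp]: "delay n e = Loop_end \<longleftrightarrow> e = Loop_end"
  by (cases e) auto

lemma delay_eq_Var_end [simp]: "delay n e = Var_end k m \<longleftrightarrow> (\<exists>m'. e = Var_end k m' \<and> m = m' + n)"
  by (cases e) auto

lemma delay_delay [simp]: "delay n (delay m e) = delay (m + n) e"
  by (cases e) auto

lemma bind_end_delay_lift_end_0 [simp]: "bind_end (delay m (lift_end 0 e)) = delay m e"
  by (cases e) auto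

lemma tail_end_of_lift: "tail_end_of (lift k B) = lift_end k (tail_end_of B)"
proof (induction B arbitrary: k)
  case (Later B)
  then show ?case by (cases "tail_end_of B") auto
next
  case (Mu B)
  then show ?case by (cases "tail_end_of B" rule: bind_end.cases) auto
qed auto

lemma tail_end_of_subst: "tail_end_of (subst a k B) = subst_end (tail_end_of a) k (tail_end_of B)"
proof (induction a arbitrary: k B)
  case (TVar j)
  then show ?case by (cases "tail_end_of B") auto
next
  case (Later a)
  then show ?case by (cases "tail_end_of a") auto
next
  case (Mu a)
  then show ?case
    by (cases "tail_end_of a" rule: bind_end.cases) (auto simp: tail_end_of_lift)
qed auto

lemma tail_end_of_Top [simp]: "tail_end_of Top = Top_end"
  by (simp add: Top_def)

lemma guarded_bound_iff_tail_end_of: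
  "guarded_bound a k g \<longleftrightarrow> (\<exists>m. tail_end_of a = Var_end k m \<and> (g \<or> m > 0))"
proof (induction a arbitrary: k g)
  case (Later a)
  then show ?case by (cases "tail_end_of a") auto
qed auto

lemma top_variant_iff_tail_end_of: "top_variant a \<longleftrightarrow> tail_end_of a = Top_end"
proof -
  have tail: "tail_end_of (tail a) = tail_end_of a" for a
    by (induction a) auto
  have "tv_tail a \<longleftrightarrow> tail_end_of a = Top_end" for a
  proof (induction a)
    case (Later a)
    then show ?case by (cases "tail_end_of a") auto
  qed (auto simp: guarded_bound_iff_tail_end_of)
  then show ?thesis
    by (simp add: top_variant_def tail)
qed

lemma proper_tail_end_of: "proper C k \<Longrightarrow> tail_end_of C \<noteq> Var_end k 0"
proof (induction C arbitrary: k)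
  case (Later a)
  then show ?case by (cases "tail_end_of a") auto
qed (auto simp: top_variant_iff_tail_end_of)

lemma type_expr_tail_end_of: "type_expr A \<Longrightarrow> tail_end_of A \<noteq> Loop_end"
proof (induction rule: type_expr.induct)
  case (te_later a)
  then show ?case by (cases "tail_end_of a") auto
next
  case (te_mu a)
  then show ?case using proper_tail_end_of[of a 0] by auto
qed auto

lemma ty_eq_tail_end_of:
  assumes "ty_eq d A B"
  shows "tail_end_of A = tail_end_of B \<and> tail_end_of A \<noteq> Loop_end"
  using assms
proof (induction rule: ty_eq.induct)
  case (eq_refl A)
  then show ?case using type_expr_tail_end_of by blast
next
  case (eq_unfold A)
  then have "tail_end_of (Mu A) \<noteq> Loop_end"
    using type_expr_tail_end_of by blast
  then show ?case
    by (cases "tail_end_of A" rule: bind_end.cases) (auto simp: tail_end_of_subst)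
next
  case (eq_fix A C)
  have fixed: "tail_end_of A = subst_end (tail_end_of C) 0 (tail_end_of A)"
    and proper: "tail_end_of C \<noteq> Var_end 0 0" and "tail_end_of A \<noteq> Loop_end"
    using eq_fix proper_tail_end_of[of C 0] by (auto simp: tail_end_of_subst)
  show ?case
  proof (cases "tail_end_of C" rule: bind_end.cases)
    case (1 m)
    \<comment> \<open>The body is guarded, so the fixed point absorbs \<open>m > 0\<close> bullets and must be \<top>-like.\<close>
    with proper have "m > 0" by auto
    with 1 fixed \<open>tail_end_of A \<noteq> Loop_end\<close> have "tail_end_of A = Top_end"
      by (cases "tail_end_of A") auto
    with 1 \<open>m > 0\<close> show ?thesis by simp
  qed (use fixed \<open>tail_end_of A \<noteq> Loop_end\<close> in auto)
next
  case (eq_dist A B)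
  then show ?case using type_expr_tail_end_of[of B] by simp
qed auto

lemma ty_eq_Top_imp_top_variant: "ty_eq d A Top \<Longrightarrow> top_variant A"
  using ty_eq_tail_end_of by (fastforce simp: top_variant_iff_tail_end_of)

lemma type_expr_Top: "type_expr Top"
  unfolding Top_def by (rule te_mu) (auto intro: type_expr.intros)

lemma lift_Top [simp]: "lift k Top = Top"
  by (simp add: Top_def)

lemma subst_Top_Top [simp]: "subst Top k B = Top"
  by (simp add: Top_def)

lemma top_variant_subst_Top: "top_variant a \<Longrightarrow> top_variant (subst a j Top)"
  by (simp add: top_variant_iff_tail_end_of tail_end_of_subst)

lemma proper_subst_Top:
  "proper a k \<Longrightarrow> k \<noteq> j \<Longrightarrow> proper (subst a j Top) (if k < j then k else k - 1)"
proof (induction a arbitrary: j k)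
  case (TVar i)
  then show ?case by (auto simp: Top_def)
next
  case (Arr a b)
  show ?case
  proof (cases "top_variant b")
    case True
    then show ?thesis by (simp add: top_variant_subst_Top)
  next
    case False
    with Arr.prems show ?thesis using Arr.IH[of k j] by simp
  qed
next
  case (Mu a)
  show ?case
  proof (cases "proper a (Suc k)")
    case True
    from Mu.IH[OF True, of "Suc j"] Mu.prems show ?thesis by (auto split: if_splits)
  next
    case False
    with Mu.prems have "top_variant (Mu a)" by simp
    then have "top_variant (subst (Mu a) j Top)" by (rule top_variant_subst_Top)
    then show ?thesis by simp
  qed
qed simp

lemma type_expr_subst_Top: "type_expr a \<Longrightarrow> type_expr (subst a j Top)"
proof (induction arbitrary: j rule: type_expr.induct)
  case (te_var i)
  then show ?case using type_expr_Top by (auto intro: type_expr.intros)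
next
  case (te_mu a)
  then show ?case using proper_subst_Top[OF te_mu(2), of "Suc j"]
    by (auto intro: type_expr.intros)
qed (auto intro: type_expr.intros)

text \<open>Each index in \<open>ks\<close> refers to the expression obtained after the preceding
  substitutions.\<close>

definition subst_Tops :: "ty \<Rightarrow> nat list \<Rightarrow> ty" where
  "subst_Tops a ks = foldl (\<lambda>t k. subst t k Top) a ks"

lemma subst_Tops_Nil [simp]: "subst_Tops a [] = a"
  by (simp add: subst_Tops_def)

lemma subst_Tops_snoc: "subst_Tops a (ks @ [k]) = subst (subst_Tops a ks) k Top"
  by (simp add: subst_Tops_def)

lemma subst_Tops_Arr [simp]: "subst_Tops (Arr a b) ks = Arr (subst_Tops a ks) (subst_Tops b ks)"
  by (induction ks rule: rev_induct) (auto simp: subst_Tops_snoc)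

lemma subst_Tops_Later [simp]: "subst_Tops (Later a) ks = Later (subst_Tops a ks)"
  by (induction ks rule: rev_induct) (auto simp: subst_Tops_snoc)

lemma subst_Tops_Mu [simp]: "subst_Tops (Mu a) ks = Mu (subst_Tops a (map Suc ks))"
  by (induction ks rule: rev_induct) (auto simp: subst_Tops_snoc)

lemma subst_Tops_TVar: "subst_Tops (TVar j) ks = Top \<or> (\<exists>i. subst_Tops (TVar j) ks = TVar i)"
  by (induction ks rule: rev_induct) (auto simp: subst_Tops_snoc)

lemma type_expr_subst_Tops: "type_expr a \<Longrightarrow> type_expr (subst_Tops a ks)"
  by (induction ks rule: rev_induct) (auto simp: subst_Tops_snoc type_expr_subst_Top)

lemma proper_subst_Tops_Suc: "proper a 0 \<Longrightarrow> proper (subst_Tops a (map Suc ks)) 0"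
proof (induction ks rule: rev_induct)
  case (snoc k ks)
  then show ?case
    using proper_subst_Top[of "subst_Tops a (map Suc ks)" 0 "Suc k"] by (simp add: subst_Tops_snoc)
qed simp

lemma Top_eq_Later_Top: "ty_eq d Top (Later Top)"
  using eq_unfold[of "Later (TVar 0)" d] type_expr_Top by (simp add: Top_def)

lemma Arr_Top_eq_Top: "type_expr A \<Longrightarrow> ty_eq d B Top \<Longrightarrow> ty_eq d (Arr A B) Top"
  by (blast intro: eq_trans eq_arr eq_refl eq_arr_top)

lemma Later_Top_eq_Top: "ty_eq d A Top \<Longrightarrow> ty_eq d (Later A) Top"
  by (blast intro: eq_trans eq_later eq_sym Top_eq_Later_Top)

lemma Mu_eq_Top:
  assumes "type_expr C" "proper C 0" "ty_eq d (subst C 0 Top) Top"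
  shows "ty_eq d (Mu C) Top"
  using assms by (blast intro: eq_sym eq_fix)

lemma subst_Tops_eq_Top:
  "type_expr a \<Longrightarrow> tail_end_of (subst_Tops a ks) = Top_end \<Longrightarrow> ty_eq d (subst_Tops a ks) Top"
proof (induction arbitrary: ks rule: type_expr.induct)
  case (te_var j)
  then show ?case using subst_Tops_TVar[of j ks] type_expr_Top by (auto intro: eq_refl)
next
  case (te_arr a b)
  then show ?case by (simp add: Arr_Top_eq_Top type_expr_subst_Tops)
next
  case (te_later a)
  then show ?case by (simp add: Later_Top_eq_Top)
next
  case (te_mu c)
  let ?c = "subst_Tops c (map Suc ks)"
  have "tail_end_of (subst ?c 0 Top) = Top_end"
    using te_mu.prems
    by (cases "tail_end_of ?c" rule: bind_end.cases) (auto simp: tail_end_of_subst)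
  then have "ty_eq d (subst ?c 0 Top) Top"
    using te_mu.IH[of "map Suc ks @ [0]"] by (simp add: subst_Tops_snoc)
  then show ?case
    using type_expr_subst_Tops[OF te_mu(1)] proper_subst_Tops_Suc[OF te_mu(2)]
    by (simp add: Mu_eq_Top)
qed

lemma top_variant_iff_eq_Top: "type_expr A \<Longrightarrow> top_variant A \<longleftrightarrow> ty_eq d A Top"
  using subst_Tops_eq_Top[of A "[]"] ty_eq_Top_imp_top_variant
  by (auto simp: top_variant_iff_tail_end_of)

theorem theorem4:
  assumes "type_expr A"
  shows "(top_variant A \<longleftrightarrow> cong_ty A Top) \<and> (top_variant A \<longleftrightarrow> simeq_ty A Top)"
  using top_variant_iff_eq_Top[OF assms] by blast

end
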